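(* Let $\ell\ge1$ be an integer and let $A$ be the operator on $L^2(0,1)$ given by $Aw=w^{(2\ell+1)}$ with domain $D(A)=\{w\in H^{2\ell+1}(0,1): w^{(k)}(0)=w^{(k)}(1)\text{ for } k=0,\dots,2\ell\}$, which is skew-adjoint and generates a unitary $C_0$-group $(e^{tA})_{t\in\mathbb{R}}$. Then there exists $0\le f_1\in L^2(0,1)$ such that there is no $t_0\ge0$ with $e^{tA}f_1\ge0$ for all $t\ge t_0$; likewise there exists $0\le f_2\in L^2(0,1)$ such that there is no $t_0\ge 0$ with $e^{-tA}f_2\ge 0$ for all $t\ge t_0$.
   Context: $f\ge 0$ means $f$ is nonnegative almost everywhere. *)

theory Defs
  imports "HOL-Analysis.Analysis"
begin

text \<open>Real L^2(0,1), represented by functions real => real; only values on (0,1)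
  matter (modulo null sets).\<close>

definition L2 :: "(real \<Rightarrow> real) \<Rightarrow> bool" where
  "L2 f \<longleftrightarrow> f \<in> borel_measurable lborel \<and>
     set_integrable lborel {0<..<1} (\<lambda>x. (f x)^2)"

definition aeq :: "(real \<Rightarrow> real) \<Rightarrow> (real \<Rightarrow> real) \<Rightarrow> bool" where
  "aeq f g \<longleftrightarrow> (AE x in lborel. x \<in> {0<..<1} \<longrightarrow> f x = g x)"

definition L2norm :: "(real \<Rightarrow> real) \<Rightarrow> real" where
  "L2norm f = sqrt (LINT x:{0<..<1}|lborel. (f x)^2)"

definition nonneg :: "(real \<Rightarrow> real) \<Rightarrow> bool" where
  "nonneg f \<longleftrightarrow> (AE x in lborel. x \<in> {0<..<1} \<longrightarrow> 0 \<le> f x)"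

definition C0_group :: "(real \<Rightarrow> (real \<Rightarrow> real) \<Rightarrow> (real \<Rightarrow> real)) \<Rightarrow> bool" where
  "C0_group T \<longleftrightarrow>
    (\<forall>t f. L2 f \<longrightarrow> L2 (T t f)) \<and>
    (\<forall>t f g. L2 f \<longrightarrow> L2 g \<longrightarrow> aeq f g \<longrightarrow> aeq (T t f) (T t g)) \<and>
    (\<forall>t f g a b. L2 f \<longrightarrow> L2 g \<longrightarrow>
        aeq (T t (\<lambda>x. a * f x + b * g x)) (\<lambda>x. a * T t f x + b * T t g x)) \<and>
    (\<forall>t. \<exists>M. \<forall>f. L2 f \<longrightarrow> L2norm (T t f) \<le> M * L2norm f) \<and>
    (\<forall>f. L2 f \<longrightarrow> aeq (T 0 f) f) \<and>
    (\<forall>s t f. L2 f \<longrightarrow> aeq (T (s + t) f) (T s (T t f))) \<and>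
    (\<forall>f. L2 f \<longrightarrow> ((\<lambda>t. L2norm (\<lambda>x. T t f x - f x)) \<longlongrightarrow> 0) (at 0))"

text \<open>D 0 is (the continuous representative of) a function in H^m(0,1), m >= 1, and
  D k is its k-th derivative: D 0, ..., D (m-1) are classically differentiable on [0,1]
  (one-sided at the endpoints), D (m-1) is absolutely continuous with a.e. derivative
  D m, and D m is in L^2(0,1).\<close>

definition sobolev_derivs :: "nat \<Rightarrow> (nat \<Rightarrow> real \<Rightarrow> real) \<Rightarrow> bool" where
  "sobolev_derivs m D \<longleftrightarrow> 1 \<le> m \<and>
     (\<forall>k < m - 1. \<forall>x\<in>{0..1}. (D k has_real_derivative D (Suc k) x) (at x within {0..1})) \<and>
     L2 (D m) \<and>
     (\<forall>x\<in>{0..1}. D (m - 1) x = D (m - 1) 0 + (LBINT s=0..x. D m s))"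

definition A_graph :: "nat \<Rightarrow> (real \<Rightarrow> real) \<Rightarrow> (real \<Rightarrow> real) \<Rightarrow> bool" where
  "A_graph l f g \<longleftrightarrow> (\<exists>D. sobolev_derivs (2 * l + 1) D \<and>
      (\<forall>k \<le> 2 * l. D k 0 = D k 1) \<and> aeq (D 0) f \<and> aeq (D (2 * l + 1)) g)"

definition generated_by_A :: "nat \<Rightarrow> (real \<Rightarrow> (real \<Rightarrow> real) \<Rightarrow> (real \<Rightarrow> real)) \<Rightarrow> bool" where
  "generated_by_A l T \<longleftrightarrow> C0_group T \<and>
     (\<forall>f g. L2 f \<longrightarrow> L2 g \<longrightarrow>
        (((\<lambda>h. L2norm (\<lambda>x. (T h f x - f x) / h - g x)) \<longlongrightarrow> 0) (at_right 0)
          \<longleftrightarrow> A_graph l f g))"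

end

theory Submission
  imports Defs
begin

text \<open>
  Every wave \<open>cos (2\<pi>nx + \<phi>)\<close> lies in \<open>D(A)\<close>, and \<open>A\<close> maps it to
  \<open>\<lambda>\<^sub>n = (-1)\<^sup>l (2\<pi>n)\<^bsup>2l+1\<^esup>\<close> times the wave with phase \<open>\<phi> + \<pi>/2\<close>; so the group
  merely advances the phase, at speed \<open>\<lambda>\<^sub>n = n\<^bsup>2l+1\<^esup>\<lambda>\<^sub>1\<close>. The nonnegative function
  \<open>(1 + cos 2\<pi>x)\<^sup>2 = 3/2 + 2 cos 2\<pi>x + 1/2 cos 4\<pi>x\<close> is therefore carried to
  \<open>3/2 + 2 cos (2\<pi>x + \<lambda>\<^sub>1t) + 1/2 cos (4\<pi>x + 2\<^bsup>2l+1\<^esup>\<lambda>\<^sub>1t)\<close>. Because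
  \<open>2\<^bsup>2l+1\<^esup> \<noteq> 2\<close> for \<open>l \<ge> 1\<close>, both phases can be brought to \<open>\<pi>\<close> modulo \<open>2\<pi>\<close> at one
  point \<open>x\<close>, for times \<open>t\<close> unbounded in both directions; there the profile is
  \<open>3/2 - 2 - 1/2 = -1\<close>.

  Since \<open>T\<close> is known only through its generator, the phase evolution is derived weakly:
  the integrals of an orbit over windows \<open>[a,b] \<subseteq> (0,1)\<close> are continuous in time and
  have right derivatives solving a rotation equation, which can be integrated because a
  continuous function with vanishing right derivative is constant.
\<close>

lemma L2_linear:
  assumes f: "L2 f" and g: "L2 g"
  shows "L2 (\<lambda>x. a * f x + b * g x)"
proof -
  have meas: "f \<in> borel_measurable lborel" "g \<in> borel_measurable lborel"
    using f g by (auto simp: L2_def)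
  have "set_integrable lborel {0<..<1} (\<lambda>x. 2 * a\<^sup>2 * (f x)\<^sup>2 + 2 * b\<^sup>2 * (g x)\<^sup>2)"
    using f g by (intro set_integral_add) (auto simp: L2_def)
  then have "set_integrable lborel {0<..<1} (\<lambda>x. (a * f x + b * g x)\<^sup>2)"
  proof (rule set_integrable_bound)
    show "set_borel_measurable lborel {0<..<1} (\<lambda>x. (a * f x + b * g x)\<^sup>2)"
      unfolding set_borel_measurable_def using meas by measurable
    have "(a * f x + b * g x)\<^sup>2 \<le> 2 * a\<^sup>2 * (f x)\<^sup>2 + 2 * b\<^sup>2 * (g x)\<^sup>2" for x
      using zero_le_power2[of "a * f x - b * g x"] by (simp add: power2_eq_square algebra_simps)
    then show "AE x in lborel. x \<in> {0<..<1} \<longrightarrow>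
        norm ((a * f x + b * g x)\<^sup>2) \<le> norm (2 * a\<^sup>2 * (f x)\<^sup>2 + 2 * b\<^sup>2 * (g x)\<^sup>2)"
      by simp
  qed
  with meas show ?thesis by (simp add: L2_def)
qed

lemma L2_scale: "L2 f \<Longrightarrow> L2 (\<lambda>x. c * f x)"
  using L2_linear[of f f c 0] by simp

lemma L2_continuous:
  assumes "continuous_on UNIV f"
  shows "L2 f"
proof -
  have "continuous_on {0..1} (\<lambda>x. (f x)\<^sup>2)"
    by (intro continuous_intros continuous_on_subset[OF assms]) auto
  then have "set_integrable lborel {0..1} (\<lambda>x. (f x)\<^sup>2)"
    unfolding set_integrable_def by (intro borel_integrable_compact) auto
  then have "set_integrable lborel {0<..<1} (\<lambda>x. (f x)\<^sup>2)"
    by (rule set_integrable_subset) auto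
  with borel_measurable_continuous_onI[OF assms] show ?thesis
    by (simp add: L2_def)
qed

lemma L2_set_integrable:
  assumes f: "L2 f"
  shows "set_integrable lborel {0<..<1} f"
proof -
  have "set_integrable lborel {0<..<1} (\<lambda>x. 1 + (f x)\<^sup>2)"
    using f L2_continuous[of "\<lambda>x. 1"] by (intro set_integral_add) (auto simp: L2_def)
  then show ?thesis
  proof (rule set_integrable_bound)
    have "f \<in> borel_measurable lborel"
      using f by (simp add: L2_def)
    then show "set_borel_measurable lborel {0<..<1} f"
      unfolding set_borel_measurable_def by measurable
    have "\<bar>f x\<bar> \<le> 1 + (f x)\<^sup>2" for x
      using zero_le_power2[of "\<bar>f x\<bar> - 1"] by (simp add: power2_eq_square algebra_simps)
    then show "AE x in lborel. x \<in> {0<..<1} \<longrightarrow> norm (f x) \<le> norm (1 + (f x)\<^sup>2)"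
      by simp
  qed
qed

lemma set_integral_abs_le_L2norm:
  assumes f: "L2 f"
  shows "(LINT x:{0<..<1}|lborel. \<bar>f x\<bar>) \<le> L2norm f"
proof -
  define c where "c = (LINT x:{0<..<1}|lborel. \<bar>f x\<bar>)"
  have sq: "set_integrable lborel {0<..<1} (\<lambda>x. (f x)\<^sup>2)"
    using f by (simp add: L2_def)
  have abs: "set_integrable lborel {0<..<1} (\<lambda>x. \<bar>f x\<bar>)"
    using set_integrable_abs[OF L2_set_integrable[OF f]] .
  have one: "set_integrable lborel {0<..<1::real} (\<lambda>x. 1::real)"
    using L2_continuous[of "\<lambda>x. 1"] by (simp add: L2_def)
  \<comment> \<open>Cauchy-Schwarz on an interval of measure 1: expand \<open>0 \<le> \<integral>(\<bar>f\<bar> - c)\<^sup>2\<close>\<close>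
  have "0 \<le> (f x)\<^sup>2 - 2 * c * \<bar>f x\<bar> + c\<^sup>2 * 1" for x
    using zero_le_power2[of "\<bar>f x\<bar> - c"] by (simp add: power2_eq_square algebra_simps)
  then have "0 \<le> (LINT x:{0<..<1}|lborel. (f x)\<^sup>2 - 2 * c * \<bar>f x\<bar> + c\<^sup>2 * 1)"
    unfolding set_lebesgue_integral_def by (intro integral_nonneg_AE) (simp add: indicator_def)
  also have "\<dots> = (LINT x:{0<..<1}|lborel. (f x)\<^sup>2 - 2 * c * \<bar>f x\<bar>)
      + (LINT x:{0<..<1::real}|lborel. c\<^sup>2 * 1)"
    by (intro set_integral_add(2) set_integral_diff(1) set_integrable_mult_right sq abs one)
  also have "(LINT x:{0<..<1}|lborel. (f x)\<^sup>2 - 2 * c * \<bar>f x\<bar>) = (LINT x:{0<..<1}|lborel. (f x)\<^sup>2) - 2 * c * c"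
    using sq abs by (simp add: set_integral_diff flip: c_def)
  also have "(LINT x:{0<..<1::real}|lborel. c\<^sup>2 * 1) = c\<^sup>2"
    by (simp add: set_integral_const)
  finally have "c\<^sup>2 \<le> (LINT x:{0<..<1}|lborel. (f x)\<^sup>2)" by (simp add: power2_eq_square)
  then show ?thesis
    unfolding L2norm_def c_def[symmetric] by (rule real_le_rsqrt)
qed

definition window_integral :: "real \<Rightarrow> real \<Rightarrow> (real \<Rightarrow> real) \<Rightarrow> real" where
  "window_integral a b f = (LINT x:{a..b}|lborel. f x)"

lemma L2_set_integrable_window:
  assumes "L2 f" "0 < a" "b < 1"
  shows "set_integrable lborel {a..b} f"
  using L2_set_integrable[OF assms(1)] by (rule set_integrable_subset) (use assms in auto)

lemma window_integral_linear:
  assumes "L2 f" "L2 g" "0 < a" "b < 1"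
  shows "window_integral a b (\<lambda>x. c * f x + d * g x) = c * window_integral a b f + d * window_integral a b g"
  using L2_set_integrable_window[OF assms(1,3,4)] L2_set_integrable_window[OF assms(2,3,4)]
  by (simp add: window_integral_def set_integral_add)

lemma window_integral_cong_aeq:
  assumes "L2 f" "L2 g" "aeq f g" "0 < a" "b < 1"
  shows "window_integral a b f = window_integral a b g"
  unfolding window_integral_def
proof (rule set_lebesgue_integral_cong_AE)
  show "f \<in> borel_measurable lborel" "g \<in> borel_measurable lborel"
    using assms by (auto simp: L2_def)
  show "AE x\<in>{a..b} in lborel. f x = g x"
    using assms(3) unfolding aeq_def by eventually_elim (use assms in auto)
qed simp

lemma window_integral_nonneg:
  assumes "nonneg f" "0 < a" "b < 1"
  shows "0 \<le> window_integral a b f"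
  unfolding window_integral_def set_lebesgue_integral_def
proof (rule integral_nonneg_AE)
  show "AE x in lborel. 0 \<le> indicator {a..b} x *\<^sub>R f x"
    using assms(1) unfolding nonneg_def by eventually_elim (use assms in \<open>auto simp: indicator_def\<close>)
qed

lemma abs_window_integral_le_L2norm:
  assumes f: "L2 f" and ab: "0 < a" "b < 1"
  shows "\<bar>window_integral a b f\<bar> \<le> L2norm f"
proof -
  have window: "set_integrable lborel {a..b} (\<lambda>x. \<bar>f x\<bar>)"
    using set_integrable_abs[OF L2_set_integrable_window[OF f ab]] .
  have unit: "set_integrable lborel {0<..<1} (\<lambda>x. \<bar>f x\<bar>)"
    using set_integrable_abs[OF L2_set_integrable[OF f]] .
  have "\<bar>window_integral a b f\<bar> \<le> (LINT x:{a..b}|lborel. \<bar>f x\<bar>)"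
    unfolding window_integral_def
    using set_integral_norm_bound[OF L2_set_integrable_window[OF f ab]] by simp
  also have "\<dots> \<le> (LINT x:{0<..<1}|lborel. \<bar>f x\<bar>)"
    using window unit ab unfolding set_lebesgue_integral_def set_integrable_def
    by (intro integral_mono) (auto simp: indicator_def)
  also have "\<dots> \<le> L2norm f"
    by (rule set_integral_abs_le_L2norm[OF f])
  finally show ?thesis .
qed

lemma continuous_negative_window:
  assumes g: "continuous_on UNIV g" and x: "0 < x" "x < 1" and gx: "g x < 0"
  obtains a b where "0 < a" "b < 1" "window_integral a b g < 0"
proof -
  obtain d where d: "d > 0" "\<And>y. dist y x < d \<Longrightarrow> dist (g y) (g x) < - g x / 2"
    using g gx unfolding continuous_on_eq_continuous_at[OF open_UNIV] continuous_at_eps_delta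
    by (metis UNIV_I divide_pos_pos neg_0_less_iff_less zero_less_numeral)
  define r where "r = min d (min x (1 - x)) / 2"
  have r: "0 < r" "r < d" "r < x" "r < 1 - x"
    using d x by (auto simp: r_def)
  have ab: "0 < x - r" "x + r < 1"
    using r by auto
  have "window_integral (x - r) (x + r) g \<le> window_integral (x - r) (x + r) (\<lambda>y. g x / 2)"
    unfolding window_integral_def
  proof (rule set_integral_mono)
    show "set_integrable lborel {x - r..x + r} g" "set_integrable lborel {x - r..x + r} (\<lambda>y. g x / 2)"
      using L2_set_integrable_window[OF L2_continuous ab] g by auto
    show "g y \<le> g x / 2" if "y \<in> {x - r..x + r}" for y
    proof -
      have "dist y x < d"
        using that r by (auto simp: dist_real_def)
      then have "\<bar>g y - g x\<bar> < - g x / 2"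
        using d(2) by (simp add: dist_real_def)
      then show ?thesis
        by linarith
    qed
  qed
  also have "\<dots> = 2 * r * (g x / 2)"
    unfolding window_integral_def using r by (simp add: set_integral_const)
  also have "\<dots> < 0"
    using r gx by (simp add: mult_pos_neg)
  finally show ?thesis
    using ab that by blast
qed

lemma not_nonneg_if_windows_agree_with_negative:
  assumes h: "L2 h" and g: "continuous_on UNIV g"
    and agree: "\<And>a b. 0 < a \<Longrightarrow> b < 1 \<Longrightarrow> window_integral a b h = window_integral a b g"
    and x: "0 < x" "x < 1" "g x < 0"
  shows "\<not> nonneg h"
proof
  assume "nonneg h"
  obtain a b where ab: "0 < a" "b < 1" and "window_integral a b g < 0"
    using continuous_negative_window[OF g x] .
  with window_integral_nonneg[OF \<open>nonneg h\<close> ab] agree[OF ab] show False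
    by simp
qed

section \<open>Orbits of a \<open>C\<^sub>0\<close>-group tested on windows\<close>

lemma C0_group_L2: "C0_group T \<Longrightarrow> L2 f \<Longrightarrow> L2 (T t f)"
  by (simp add: C0_group_def)

lemma window_orbit_linear:
  assumes T: "C0_group T" and f: "L2 f" and g: "L2 g" and ab: "0 < a" "b < 1"
  shows "window_integral a b (T t (\<lambda>x. c * f x + d * g x))
    = c * window_integral a b (T t f) + d * window_integral a b (T t g)"
proof -
  have "aeq (T t (\<lambda>x. c * f x + d * g x)) (\<lambda>x. c * T t f x + d * T t g x)"
    using T f g by (simp add: C0_group_def)
  then have "window_integral a b (T t (\<lambda>x. c * f x + d * g x))
      = window_integral a b (\<lambda>x. c * T t f x + d * T t g x)"
    by (rule window_integral_cong_aeq[OF C0_group_L2[OF T L2_linear[OF f g]]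
          L2_linear[OF C0_group_L2[OF T f] C0_group_L2[OF T g]] _ ab])
  also have "\<dots> = c * window_integral a b (T t f) + d * window_integral a b (T t g)"
    by (rule window_integral_linear[OF C0_group_L2[OF T f] C0_group_L2[OF T g] ab])
  finally show ?thesis .
qed

lemma window_orbit_scale:
  assumes "C0_group T" "L2 f" "0 < a" "b < 1"
  shows "window_integral a b (T t (\<lambda>x. c * f x)) = c * window_integral a b (T t f)"
  using window_orbit_linear[OF assms(1,2,2,3,4), of t c 0] by simp

lemma window_orbit_add:
  assumes T: "C0_group T" and f: "L2 f" and ab: "0 < a" "b < 1"
  shows "window_integral a b (T (s + t) f) = window_integral a b (T s (T t f))"
proof (rule window_integral_cong_aeq[OF C0_group_L2[OF T f] C0_group_L2[OF T C0_group_L2[OF T f]] _ ab])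
  show "aeq (T (s + t) f) (T s (T t f))"
    using T f by (simp add: C0_group_def)
qed

lemma window_orbit_zero:
  assumes T: "C0_group T" and f: "L2 f" and ab: "0 < a" "b < 1"
  shows "window_integral a b (T 0 f) = window_integral a b f"
proof (rule window_integral_cong_aeq[OF C0_group_L2[OF T f] f _ ab])
  show "aeq (T 0 f) f"
    using T f by (simp add: C0_group_def)
qed

lemma window_orbit_continuous:
  assumes T: "C0_group T" and f: "L2 f" and ab: "0 < a" "b < 1"
  shows "isCont (\<lambda>s. window_integral a b (T s f)) t"
proof -
  define y where "y = T t f"
  have y: "L2 y"
    unfolding y_def using T f by (rule C0_group_L2)
  have diff: "window_integral a b (T (t + h) f) - window_integral a b (T t f)
      = window_integral a b (\<lambda>x. 1 * T h y x + (-1) * y x)" for h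
    using window_orbit_add[OF T f ab, of h t] window_integral_linear[OF C0_group_L2[OF T y] y ab, of 1 h "-1"]
    by (simp add: y_def add.commute)
  have "((\<lambda>h. window_integral a b (\<lambda>x. 1 * T h y x + (-1) * y x)) \<longlongrightarrow> 0) (at 0)"
  proof (rule Lim_null_comparison)
    show "\<forall>\<^sub>F h in at 0. norm (window_integral a b (\<lambda>x. 1 * T h y x + (-1) * y x))
        \<le> L2norm (\<lambda>x. T h y x - y x)"
    proof (intro always_eventually allI)
      fix h
      show "norm (window_integral a b (\<lambda>x. 1 * T h y x + (-1) * y x)) \<le> L2norm (\<lambda>x. T h y x - y x)"
        using abs_window_integral_le_L2norm[OF L2_linear[OF C0_group_L2[OF T y, of h] y, of 1 "-1"] ab]
        by simp
    qed
    show "((\<lambda>h. L2norm (\<lambda>x. T h y x - y x)) \<longlongrightarrow> 0) (at 0)"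
      using T y by (simp add: C0_group_def)
  qed
  then have "((\<lambda>h. window_integral a b (T (t + h) f) - window_integral a b (T t f)) \<longlongrightarrow> 0) (at 0)"
    by (simp only: diff)
  then have "((\<lambda>h. window_integral a b (T (t + h) f)) \<longlongrightarrow> window_integral a b (T t f)) (at 0)"
    by (simp add: LIM_zero_iff)
  then show ?thesis
    by (simp add: isCont_iff)
qed

definition generator_limit ::
    "(real \<Rightarrow> (real \<Rightarrow> real) \<Rightarrow> (real \<Rightarrow> real)) \<Rightarrow> (real \<Rightarrow> real) \<Rightarrow> (real \<Rightarrow> real) \<Rightarrow> bool"
  where "generator_limit T f g \<longleftrightarrow>
    ((\<lambda>h. L2norm (\<lambda>x. (T h f x - f x) / h - g x)) \<longlongrightarrow> 0) (at_right 0)"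

lemma window_orbit_right_derivative:
  assumes T: "C0_group T" and f: "L2 f" and g: "L2 g" and ab: "0 < a" "b < 1"
    and gen: "generator_limit T f g"
  shows "((\<lambda>s. window_integral a b (T s f)) has_real_derivative window_integral a b (T t g))
    (at t within {t<..})"
proof -
  define p where "p s = window_integral a b (T s f)" for s
  obtain M where M: "\<And>h. L2 h \<Longrightarrow> L2norm (T t h) \<le> M * L2norm h"
    using T unfolding C0_group_def by blast
  define D where "D h x = 1 * T h f x + (-1) * f x" for h x
  define F where "F h x = (1 / h) * D h x + (-1) * g x" for h x
  have D: "L2 (D h)" for h
    unfolding D_def by (rule L2_linear[OF C0_group_L2[OF T f] f])
  have F: "L2 (F h)" for h
    unfolding F_def by (rule L2_linear[OF D g])
  have quotient:
    "(p (t + h) - p t) / h - window_integral a b (T t g) = window_integral a b (T t (F h))" for h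
  proof -
    have "window_integral a b (T t (F h))
        = (1 / h) * window_integral a b (T t (D h)) + (-1) * window_integral a b (T t g)"
      unfolding F_def by (rule window_orbit_linear[OF T D g ab])
    also have "window_integral a b (T t (D h)) = 1 * p (t + h) + (-1) * p t"
      unfolding D_def p_def window_orbit_add[OF T f ab]
      by (rule window_orbit_linear[OF T C0_group_L2[OF T f] f ab])
    finally show ?thesis
      by (simp add: field_simps)
  qed
  have "((\<lambda>h. window_integral a b (T t (F h))) \<longlongrightarrow> 0) (at_right 0)"
  proof (rule Lim_null_comparison)
    show "\<forall>\<^sub>F h in at_right 0. norm (window_integral a b (T t (F h))) \<le> M * L2norm (F h)"
      by (intro always_eventually allI order.trans[OF _ M[OF F]])
         (simp add: abs_window_integral_le_L2norm[OF C0_group_L2[OF T F] ab])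
    have "F h = (\<lambda>x. (T h f x - f x) / h - g x)" for h
      unfolding F_def D_def by (auto simp: field_simps)
    with gen show "((\<lambda>h. M * L2norm (F h)) \<longlongrightarrow> 0) (at_right 0)"
      unfolding generator_limit_def using tendsto_mult_left[of _ 0 _ M] by simp
  qed
  then have "((\<lambda>h. (p (t + h) - p t) / h) \<longlongrightarrow> window_integral a b (T t g)) (at_right 0)"
    by (simp add: LIM_zero_iff flip: quotient)
  then have "((\<lambda>s. (p s - p t) / (s - t)) \<longlongrightarrow> window_integral a b (T t g)) (at_right t)"
    by (subst at_right_to_0) (simp add: filterlim_filtermap add.commute)
  then show ?thesis
    unfolding p_def[symmetric] by (subst has_field_derivative_iff)
qed

section \<open>Functions with vanishing right derivative\<close>

lemma right_derivative_zero_increment_le: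
  fixes g :: "real \<Rightarrow> real"
  assumes cont: "\<And>x. isCont g x" and deriv: "\<And>x. (g has_real_derivative 0) (at x within {x<..})"
    and "a \<le> b" "0 < e"
  shows "g b - g a \<le> e * (b - a)"
proof -
  define S where "S = {a..b} \<inter> {x. g x - g a - e * (x - a) \<le> 0}"
  have "a \<in> S"
    using \<open>a \<le> b\<close> by (simp add: S_def)
  have bdd: "bdd_above S"
    unfolding S_def by (rule bdd_aboveI[of _ b]) auto
  have "continuous_on UNIV (\<lambda>x. g x - g a - e * (x - a))"
    using cont by (intro continuous_intros) (simp add: continuous_at_imp_continuous_on)
  then have "closed S"
    unfolding S_def by (intro closed_Int closed_Collect_le continuous_on_const) auto
  then have "Sup S \<in> S"
    using \<open>a \<in> S\<close> bdd by (intro closed_contains_Sup) auto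
  \<comment> \<open>the supremum cannot lie below \<open>b\<close>: the vanishing right derivative pushes \<open>S\<close> past it\<close>
  moreover have "Sup S = b"
  proof (rule ccontr)
    let ?s = "Sup S"
    assume "?s \<noteq> b"
    with \<open>?s \<in> S\<close> have "?s < b"
      by (simp add: S_def)
    have "((\<lambda>y. (g y - g ?s) / (y - ?s)) \<longlongrightarrow> 0) (at_right ?s)"
      using deriv[of ?s] by (simp add: has_field_derivative_iff)
    then have "\<forall>\<^sub>F y in at_right ?s. (g y - g ?s) / (y - ?s) < e"
      using \<open>0 < e\<close> by (rule order_tendstoD(2))
    then obtain b' where "b' > ?s" and slope: "\<And>y. ?s < y \<Longrightarrow> y < b' \<Longrightarrow> (g y - g ?s) / (y - ?s) < e"
      unfolding eventually_at_right_field by blast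
    define y where "y = (?s + min b b') / 2"
    have y: "?s < y" "y < b'" "y \<le> b"
      using \<open>b' > ?s\<close> \<open>?s < b\<close> by (auto simp: y_def)
    then have "g y - g ?s \<le> e * (y - ?s)"
      using slope[of y] by (simp add: divide_less_eq)
    with \<open>?s \<in> S\<close> y have "y \<in> S"
      by (simp add: S_def algebra_simps)
    then have "y \<le> ?s"
      using bdd by (rule cSup_upper)
    with y show False
      by simp
  qed
  ultimately show ?thesis
    by (simp add: S_def)
qed

lemma right_derivative_zero_imp_constant:
  fixes g :: "real \<Rightarrow> real"
  assumes cont: "\<And>x. isCont g x" and deriv: "\<And>x. (g has_real_derivative 0) (at x within {x<..})"
  shows "g b = g a"
proof -
  have "g v = g u" if "u \<le> v" for u v
  proof -
    have bound: "\<bar>g v - g u\<bar> \<le> e * (v - u)" if "0 < e" for e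
      using right_derivative_zero_increment_le[OF cont deriv \<open>u \<le> v\<close> \<open>0 < e\<close>]
        right_derivative_zero_increment_le[of "\<lambda>x. - g x", OF _ _ \<open>u \<le> v\<close> \<open>0 < e\<close>]
        cont deriv DERIV_minus[OF deriv]
      by (simp add: abs_le_iff)
    have "\<bar>g v - g u\<bar> \<le> 0 + e" if "0 < e" for e
    proof -
      have "\<bar>g v - g u\<bar> \<le> e / (v - u + 1) * (v - u)"
        using \<open>0 < e\<close> \<open>u \<le> v\<close> by (intro bound) simp
      also have "\<dots> \<le> e"
        using \<open>0 < e\<close> \<open>u \<le> v\<close> by (simp add: field_simps)
      finally show ?thesis
        by simp
    qed
    then show ?thesis
      using field_le_epsilon[of "\<bar>g v - g u\<bar>" 0] by simp
  qed
  then show ?thesis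
    by (metis linear)
qed

lemma rotation_from_right_derivatives:
  fixes P Q :: "real \<Rightarrow> real"
  assumes "\<And>s. isCont P s" "\<And>s. isCont Q s"
    and P': "\<And>s. (P has_real_derivative lam * Q s) (at s within {s<..})"
    and Q': "\<And>s. (Q has_real_derivative - (lam * P s)) (at s within {s<..})"
  shows "P t = cos (lam * t) * P 0 + sin (lam * t) * Q 0"
proof -
  define u where "u s = cos (lam * s) * P s - sin (lam * s) * Q s" for s
  define v where "v s = sin (lam * s) * P s + cos (lam * s) * Q s" for s
  have "(u has_real_derivative 0) (at s within {s<..})"
     "(v has_real_derivative 0) (at s within {s<..})" for s
    unfolding u_def[abs_def] v_def[abs_def]
    by (rule derivative_eq_intros P' Q' refl | simp add: algebra_simps)+
  moreover have "isCont u s" "isCont v s" for s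
    unfolding u_def[abs_def] v_def[abs_def] by (intro continuous_intros assms(1,2))+
  ultimately have "u t = u 0" "v t = v 0"
    by (simp_all add: right_derivative_zero_imp_constant)
  then have "u t = P 0" "v t = Q 0"
    by (simp_all add: u_def v_def)
  moreover have "P t = cos (lam * t) * u t + sin (lam * t) * v t"
    using sin_cos_squared_add[of "lam * t"]
    by (simp add: u_def v_def algebra_simps flip: power2_eq_square distrib_left)
  ultimately show ?thesis
    by simp
qed

section \<open>Travelling waves\<close>

definition wave :: "real \<Rightarrow> real \<Rightarrow> real \<Rightarrow> real" where
  "wave k ph x = cos (k * x + ph)"

lemma continuous_on_wave: "continuous_on UNIV (wave k ph)"
  unfolding wave_def[abs_def] by (intro continuous_intros)

lemma L2_wave: "L2 (wave k ph)"
  by (rule L2_continuous[OF continuous_on_wave])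

lemma wave_add_pi: "wave k (ph + pi) = (\<lambda>x. - wave k ph x)"
  by (simp add: wave_def fun_eq_iff add.assoc [symmetric])

lemma cos_add_pi_half: "cos (x + pi / 2) = - sin x"
  by (simp add: cos_add)

lemma cos_add_2pi_int: "cos (x + 2 * pi * of_int i) = cos x"
  by (simp add: cos_add)

lemma wave_add: "wave k (ph + c) x = cos c * wave k ph x + sin c * wave k (ph + pi / 2) x"
  using cos_add[of "k * x + ph" c] cos_add_pi_half[of "k * x + ph"]
  by (simp add: wave_def add.assoc)

lemma A_graph_wave:
  "A_graph l (wave (2 * pi * real n) ph)
     (\<lambda>x. (-1) ^ l * (2 * pi * real n) ^ (2 * l + 1) * wave (2 * pi * real n) (ph + pi / 2) x)"
proof -
  define k where "k = 2 * pi * real n"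
  define D where "D j x = k ^ j * cos (k * x + ph + real j * pi / 2)" for j x
  have deriv: "(D j has_real_derivative D (Suc j) x) (at x)" for j x
  proof -
    have "k * x + ph + real (Suc j) * pi / 2 = (k * x + ph + real j * pi / 2) + pi / 2"
      by (simp add: field_simps)
    then have "cos (k * x + ph + real (Suc j) * pi / 2) = - sin (k * x + ph + real j * pi / 2)"
      by (simp only: cos_add_pi_half)
    then show ?thesis
      unfolding D_def by (auto intro!: derivative_eq_intros)
  qed
  have cont: "continuous_on UNIV (D j)" for j
    unfolding D_def[abs_def] by (intro continuous_intros)
  have "sobolev_derivs (2 * l + 1) D"
    unfolding sobolev_derivs_def
  proof (intro conjI ballI allI impI)
    show "(D j has_real_derivative D (Suc j) x) (at x within {0..1})" for j x
      using deriv by (rule has_field_derivative_at_within)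
    show "L2 (D (2 * l + 1))"
      by (rule L2_continuous[OF cont])
    fix x :: real
    have "(LBINT s=ereal 0..ereal x. D (2 * l + 1) s) = D (2 * l) x - D (2 * l) 0"
    proof (rule interval_integral_FTC_finite)
      show "continuous_on {min 0 x..max 0 x} (D (2 * l + 1))"
        using cont by (rule continuous_on_subset) simp
      show "(D (2 * l) has_vector_derivative D (2 * l + 1) y) (at y within {min 0 x..max 0 x})" for y
        using deriv[of "2 * l" y]
        by (simp add: has_field_derivative_at_within has_real_derivative_iff_has_vector_derivative [symmetric])
    qed
    then show "D (2 * l + 1 - 1) x = D (2 * l + 1 - 1) 0 + (LBINT s=0..x. D (2 * l + 1) s)"
      by (simp add: zero_ereal_def)
  qed simp
  moreover have "D j 0 = D j 1" for j
    using cos_add_2pi_int[of "ph + real j * pi / 2" "int n"]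
    by (simp add: D_def k_def add.commute add.left_commute)
  moreover have "D (2 * l + 1) x = (-1) ^ l * k ^ (2 * l + 1) * wave k (ph + pi / 2) x" for x
  proof -
    have "cos (k * x + ph + real (2 * l + 1) * pi / 2) = cos ((k * x + ph + pi / 2) + real l * pi)"
      by (simp add: algebra_simps add_divide_distrib)
    also have "\<dots> = (-1) ^ l * cos (k * x + ph + pi / 2)"
      using cos_add[of "k * x + ph + pi / 2" "real l * pi"] by simp
    finally show ?thesis
      by (simp add: D_def wave_def add.assoc)
  qed
  moreover have "D 0 = wave k ph"
    by (simp add: D_def wave_def fun_eq_iff)
  ultimately show ?thesis
    unfolding A_graph_def aeq_def k_def[symmetric] by (intro exI[of _ D]) simp
qed

lemma window_orbit_wave:
  assumes T: "C0_group T" and ab: "0 < a" "b < 1"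
    and gen: "\<And>ph. generator_limit T (wave k ph) (\<lambda>x. lam * wave k (ph + pi / 2) x)"
  shows "window_integral a b (T t (wave k ph)) = window_integral a b (wave k (ph + lam * t))"
proof -
  define P where "P ps s = window_integral a b (T s (wave k ps))" for ps s
  have deriv: "(P ps has_real_derivative lam * P (ps + pi / 2) s) (at s within {s<..})" for ps s
    using window_orbit_right_derivative[OF T L2_wave L2_scale[OF L2_wave] ab gen, of ps s]
    unfolding P_def window_orbit_scale[OF T L2_wave ab] .
  have antiperiodic: "P (ps + pi) s = - P ps s" for ps s
    using window_orbit_scale[OF T L2_wave ab, of s "-1" k ps]
    unfolding P_def wave_add_pi by simp
  have cont: "isCont (P ps) s" for ps s
    unfolding P_def by (rule window_orbit_continuous[OF T L2_wave ab])
  have "P ph t = cos (lam * t) * P ph 0 + sin (lam * t) * P (ph + pi / 2) 0"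
    using deriv[of "ph + pi / 2"] antiperiodic[of ph]
    by (intro rotation_from_right_derivatives[OF cont cont deriv]) (simp add: add.assoc)
  also have "\<dots> = window_integral a b
      (\<lambda>x. cos (lam * t) * wave k ph x + sin (lam * t) * wave k (ph + pi / 2) x)"
    by (simp add: P_def window_orbit_zero[OF T L2_wave ab] window_integral_linear[OF L2_wave L2_wave ab])
  finally show ?thesis
    by (simp add: P_def flip: wave_add)
qed

definition angular_speed :: "nat \<Rightarrow> real" where
  "angular_speed l = (-1) ^ l * (2 * pi) ^ (2 * l + 1)"

lemma window_orbit_wave_generated:
  assumes gen: "generated_by_A l T" and ab: "0 < a" "b < 1"
  shows "window_integral a b (T t (wave (2 * pi * real n) ph))
    = window_integral a b (wave (2 * pi * real n) (ph + real n ^ (2 * l + 1) * angular_speed l * t))"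
proof (rule window_orbit_wave[OF _ ab])
  show "C0_group T"
    using gen by (simp add: generated_by_A_def)
  have speed: "(-1) ^ l * (2 * pi * real n) ^ (2 * l + 1) = real n ^ (2 * l + 1) * angular_speed l"
    by (simp add: angular_speed_def power_mult_distrib)
  show "generator_limit T (wave (2 * pi * real n) ph)
      (\<lambda>x. real n ^ (2 * l + 1) * angular_speed l * wave (2 * pi * real n) (ph + pi / 2) x)" for ph
  proof -
    have "\<forall>f g. L2 f \<longrightarrow> L2 g \<longrightarrow> (generator_limit T f g \<longleftrightarrow> A_graph l f g)"
      using gen by (simp add: generated_by_A_def generator_limit_def)
    from this[rule_format, OF L2_wave L2_scale[OF L2_wave]] show ?thesis
      using A_graph_wave[of l n ph] unfolding speed by simp
  qed
qed

section \<open>A nonnegative function leaving the positive cone\<close>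

definition bump_profile :: "nat \<Rightarrow> real \<Rightarrow> real \<Rightarrow> real" where
  "bump_profile l t x = 3 / 2 + 2 * cos (2 * pi * x + angular_speed l * t)
     + 1 / 2 * cos (4 * pi * x + 2 ^ (2 * l + 1) * angular_speed l * t)"

lemma continuous_on_bump_profile: "continuous_on UNIV (bump_profile l t)"
  unfolding bump_profile_def[abs_def] by (intro continuous_intros)

lemma window_orbit_bump:
  assumes gen: "generated_by_A l T" and ab: "0 < a" "b < 1"
  shows "window_integral a b (T t (\<lambda>x. (1 + cos (2 * pi * x))\<^sup>2))
    = window_integral a b (bump_profile l t)"
proof -
  have T: "C0_group T"
    using gen by (simp add: generated_by_A_def)
  define w where "w n = wave (2 * pi * real n)" for n
  have w: "L2 (w n ph)" for n ph
    unfolding w_def by (rule L2_wave)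
  have orbit: "window_integral a b (T t (w n 0))
      = window_integral a b (w n (real n ^ (2 * l + 1) * angular_speed l * t))" for n
    unfolding w_def using window_orbit_wave_generated[OF gen ab, of t n 0] by simp
  have "(1 + cos (2 * pi * x))\<^sup>2 = 3 / 2 + 2 * cos (2 * pi * x) + 1 / 2 * cos (2 * (2 * pi * x))" for x
    unfolding cos_double_cos by (simp add: power2_eq_square algebra_simps)
  then have bump: "(\<lambda>x. (1 + cos (2 * pi * x))\<^sup>2)
      = (\<lambda>x. 1 * (3 / 2 * w 0 0 x + 2 * w 1 0 x) + 1 / 2 * w 2 0 x)"
    by (simp add: fun_eq_iff w_def wave_def mult_ac)
  have "window_integral a b (T t (\<lambda>x. (1 + cos (2 * pi * x))\<^sup>2))
      = 1 * window_integral a b (T t (\<lambda>x. 3 / 2 * w 0 0 x + 2 * w 1 0 x))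
        + 1 / 2 * window_integral a b (T t (w 2 0))"
    unfolding bump by (rule window_orbit_linear[OF T L2_linear[OF w w] w ab])
  also have "window_integral a b (T t (\<lambda>x. 3 / 2 * w 0 0 x + 2 * w 1 0 x))
      = 3 / 2 * window_integral a b (T t (w 0 0)) + 2 * window_integral a b (T t (w 1 0))"
    by (rule window_orbit_linear[OF T w w ab])
  also have "1 * (3 / 2 * window_integral a b (T t (w 0 0)) + 2 * window_integral a b (T t (w 1 0)))
      + 1 / 2 * window_integral a b (T t (w 2 0))
    = 1 * (3 / 2 * window_integral a b (w 0 0) + 2 * window_integral a b (w 1 (angular_speed l * t)))
      + 1 / 2 * window_integral a b (w 2 (2 ^ (2 * l + 1) * angular_speed l * t))"
    using orbit[of 0] orbit[of 1] orbit[of 2] by simp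
  also have "\<dots> = window_integral a b (\<lambda>x. 1 * (3 / 2 * w 0 0 x + 2 * w 1 (angular_speed l * t) x)
      + 1 / 2 * w 2 (2 ^ (2 * l + 1) * angular_speed l * t) x)"
    by (simp only: window_integral_linear[OF L2_linear[OF w w] w ab] window_integral_linear[OF w w ab])
  also have "\<dots> = window_integral a b (bump_profile l t)"
    by (rule arg_cong[where f = "window_integral a b"])
       (simp add: fun_eq_iff bump_profile_def w_def wave_def algebra_simps)
  finally show ?thesis .
qed

lemma bump_profile_negative:
  assumes "1 \<le> l"
  obtains x d where "0 < x" "x < 1" "\<And>i::int. bump_profile l ((2 * pi * i + d) / angular_speed l) x < 0"
proof -
  define q :: real where "q = 2 ^ (2 * l + 1) - 2"
  have "(2::real) ^ 3 \<le> 2 ^ (2 * l + 1)"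
    using assms by (intro power_increasing) auto
  then have q: "6 \<le> q"
    by (simp add: q_def)
  have pow: "(2::real) ^ (2 * l + 1) = q + 2"
    by (simp add: q_def)
  define x where "x = 1 / 2 - 1 / (2 * q)"
  have x: "0 < x" "x < 1"
    using q by (auto simp: x_def field_simps)
  have "bump_profile l ((2 * pi * i + pi / q) / angular_speed l) x < 0" for i :: int
  proof -
    define t where "t = (2 * pi * i + pi / q) / angular_speed l"
    have speed: "angular_speed l * t = 2 * pi * i + pi / q"
      by (simp add: t_def angular_speed_def)
    have "2 * pi * x + angular_speed l * t = pi + 2 * pi * of_int i"
      unfolding speed x_def using q by (simp add: field_simps)
    moreover have "4 * pi * x + 2 ^ (2 * l + 1) * angular_speed l * t
        = pi + 2 * pi * of_int (1 + 2 ^ (2 * l + 1) * i)"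
    proof -
      have "2 ^ (2 * l + 1) * angular_speed l * t = (q + 2) * (2 * pi * i + pi / q)"
        by (simp only: mult.assoc speed pow)
      moreover have "real_of_int (1 + 2 ^ (2 * l + 1) * i) = 1 + (q + 2) * i"
        by (simp only: of_int_add of_int_mult of_int_power of_int_1 of_int_numeral pow)
      ultimately show ?thesis
        using q by (simp add: x_def field_simps)
    qed
    ultimately have "bump_profile l t x = -1"
      unfolding bump_profile_def by (simp only: cos_add_2pi_int cos_pi)
    then show ?thesis
      by (simp add: t_def)
  qed
  with x that show ?thesis
    by blast
qed

lemma ex_int_ge_affine:
  fixes c d r :: real
  assumes "c \<noteq> 0"
  shows "\<exists>i::int. r \<le> (2 * pi * i + d) / c"
proof -
  define z where "z = (r * c - d) / (2 * pi)"
  have rc: "r * c = 2 * pi * z + d"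
    by (simp add: z_def)
  show ?thesis
  proof (cases "0 < c")
    case True
    have "2 * pi * z \<le> 2 * pi * \<lceil>z\<rceil>"
      by (intro mult_left_mono le_of_int_ceiling) simp
    with True rc show ?thesis
      by (intro exI[of _ "\<lceil>z\<rceil>"]) (simp add: pos_le_divide_eq)
  next
    case False
    with assms have "c < 0"
      by simp
    have "2 * pi * \<lfloor>z\<rfloor> \<le> 2 * pi * z"
      by (intro mult_left_mono of_int_floor_le) simp
    with \<open>c < 0\<close> rc show ?thesis
      by (intro exI[of _ "\<lfloor>z\<rfloor>"]) (simp add: neg_le_divide_eq)
  qed
qed

lemma ex_int_le_affine:
  fixes c d r :: real
  assumes "c \<noteq> 0"
  shows "\<exists>i::int. (2 * pi * i + d) / c \<le> r"
  using ex_int_ge_affine[of "- c" "- r" d] assms by auto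

theorem proposition6p10:
  fixes l :: nat and T :: "real \<Rightarrow> (real \<Rightarrow> real) \<Rightarrow> (real \<Rightarrow> real)"
  assumes "1 \<le> l" and "generated_by_A l T"
  shows "(\<exists>f1. L2 f1 \<and> nonneg f1 \<and> \<not> (\<exists>t0\<ge>0. \<forall>t\<ge>t0. nonneg (T t f1))) \<and>
         (\<exists>f2. L2 f2 \<and> nonneg f2 \<and> \<not> (\<exists>t0\<ge>0. \<forall>t\<ge>t0. nonneg (T (- t) f2)))"
proof -
  have T: "C0_group T"
    using assms(2) by (simp add: generated_by_A_def)
  define f :: "real \<Rightarrow> real" where "f x = (1 + cos (2 * pi * x))\<^sup>2" for x
  have f: "L2 f" "nonneg f"
    unfolding f_def[abs_def] nonneg_def by (intro L2_continuous continuous_intros) simp_all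
  obtain x d where x: "0 < x" "x < 1"
    and neg: "\<And>i::int. bump_profile l ((2 * pi * i + d) / angular_speed l) x < 0"
    using bump_profile_negative[OF assms(1)] by blast
  have bad: "\<not> nonneg (T ((2 * pi * i + d) / angular_speed l) f)" for i :: int
    using not_nonneg_if_windows_agree_with_negative[OF C0_group_L2[OF T f(1)] continuous_on_bump_profile _ x neg]
      window_orbit_bump[OF assms(2)] by (simp add: f_def[abs_def])
  have speed: "angular_speed l \<noteq> 0"
    by (simp add: angular_speed_def)
  have "\<exists>t\<ge>t0. \<not> nonneg (T t f)" for t0
    using ex_int_ge_affine[OF speed, of t0 d] bad by blast
  moreover have "\<exists>t\<ge>t0. \<not> nonneg (T (- t) f)" for t0
    using ex_int_le_affine[OF speed, of d "- t0"] bad by (metis minus_minus neg_le_iff_le)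
  ultimately show ?thesis
    using f by blast
qed

end
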